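(* $\widehat{C}_{3,0} = 2$.
   Context: $\mathcal{K}_k^n = \{\prod_{s=1}^n [\frac{i_s-1}{k}, \frac{i_s}{k}] : i_s \in \{1,\dots,k\}\}$ (cubes dividing $I^n=[0,1]^n$); $\dim$ is topological dimension; a set $S\subset I^n$ connects some opposite faces of $I^n$ if it is connected and meets both $\{z_i=0\}$ and $\{z_i=1\}$ for some $i$; $\mathbb{Z}^{n-1}$ has the $\ell^\infty$ norm; $P\subset\mathbb{Z}^{n-1}$ is $1$-connected if any two points are joined by a finite chain in $P$ with consecutive $\ell^\infty$-distances $\le 1$. $\widehat{C}_{n,m}$ is the least constant $C>0$ such that: for every $k\in\mathbb{N}$ and every $F\colon\mathcal{K}_k^n\to\mathbb{Z}^{n-1}$ with $\|F(K_1)-F(K_2)\|_\infty\le 1$ whenever $\dim(K_1\cap K_2)\ge m$, there exist a $1$-connected $P\subset\mathbb{Z}^{n-1}$ with $|P|\le C$ and $\mathcal{S}\subset F^{-1}[P]$ with $\bigcup\mathcal{S}$ connecting some opposite faces of $I^n$. (For $m=0$ the hypothesis on $F$ reads: $\|F(K_1)-F(K_2)\|_\infty\le1$ whenever $K_1\cap K_2\neq\emptyset$.) *)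

theory Defs
  imports "HOL-Analysis.Analysis"
begin

text \<open>Points of I^n are vectors of type real^'n (n = CARD('n)); values of F lie in
  int^'d (playing the role of Z^(n-1), so one instantiates CARD('d) = CARD('n) - 1).\<close>

definition grid_cube :: "nat \<Rightarrow> ('n::finite \<Rightarrow> nat) \<Rightarrow> (real^'n) set" where
  "grid_cube k i = {z. \<forall>s. (real (i s) - 1) / real k \<le> z $ s \<and> z $ s \<le> real (i s) / real k}"

definition grid_cubes :: "nat \<Rightarrow> (real^'n::finite) set set" where
  "grid_cubes k = grid_cube k ` {i. \<forall>s. 1 \<le> i s \<and> i s \<le> k}"

definition linf_dist :: "int^'d::finite \<Rightarrow> int^'d \<Rightarrow> int" where
  "linf_dist a b = Max (range (\<lambda>j. \<bar>a $ j - b $ j\<bar>))"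

definition one_connected :: "(int^'d::finite) set \<Rightarrow> bool" where
  "one_connected P \<longleftrightarrow>
     (\<forall>p\<in>P. \<forall>q\<in>P. \<exists>xs. xs \<noteq> [] \<and> hd xs = p \<and> last xs = q \<and> set xs \<subseteq> P \<and>
        (\<forall>j. Suc j < length xs \<longrightarrow> linf_dist (xs ! j) (xs ! Suc j) \<le> 1))"

definition connects_opposite_faces :: "(real^'n::finite) set \<Rightarrow> bool" where
  "connects_opposite_faces S \<longleftrightarrow>
     connected S \<and> (\<exists>i. (\<exists>z\<in>S. z $ i = 0) \<and> (\<exists>z\<in>S. z $ i = 1))"

text \<open>Hypothesis on F: adjacent cubes (dim of intersection \<ge> m) get values at
  ell-infinity distance \<le> 1.  Intersections of grid cubes are convex, so their
  topological dimension equals their affine dimension (aff_dim {} = -1).\<close>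
definition admissible_map :: "nat \<Rightarrow> nat \<Rightarrow> ((real^'n::finite) set \<Rightarrow> int^'d::finite) \<Rightarrow> bool" where
  "admissible_map k m F \<longleftrightarrow>
     (\<forall>K1\<in>grid_cubes k. \<forall>K2\<in>grid_cubes k.
        aff_dim (K1 \<inter> K2) \<ge> int m \<longrightarrow> linf_dist (F K1) (F K2) \<le> 1)"

definition good_constant :: "'n::finite itself \<Rightarrow> 'd::finite itself \<Rightarrow> nat \<Rightarrow> real \<Rightarrow> bool" where
  "good_constant _ _ m C \<longleftrightarrow>
     (\<forall>k::nat. k \<ge> 1 \<longrightarrow> (\<forall>F :: (real^'n) set \<Rightarrow> int^'d. admissible_map k m F \<longrightarrow>
        (\<exists>P \<Sigma>. one_connected P \<and> finite P \<and> real (card P) \<le> C \<and>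
             \<Sigma> \<subseteq> {K \<in> grid_cubes k. F K \<in> P} \<and> connects_opposite_faces (\<Union>\<Sigma>))))"

definition hatC :: "'n::finite itself \<Rightarrow> 'd::finite itself \<Rightarrow> nat \<Rightarrow> real" where
  "hatC tn td m = Inf {C. C > 0 \<and> good_constant tn td m C}"

end

theory Submission
  imports Defs
begin

text \<open>Upper bound: tile the plane Z^2 by vertical dominoes laid like a brick wall and colour the
  bricks with three colours so that touching bricks get different colours. Colour each cube K
  by the colour of the brick containing F K. By the n-dimensional Hex theorem, a consequence of
  Brouwer's fixed point theorem, for some colour c a chain of touching c-coloured cubes joins the
  two faces orthogonal to the c-th axis. Along this chain F moves by at most 1 in the sup norm
  without changing colour, so it never leaves a single brick, a 1-connected set of two points.

  Lower bound: a single value would have to suffice, but there is a map from the 27 cubes of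
  the 3 \<times> 3 \<times> 3 grid into the four corners of the unit square none of whose fibres contains a
  connected cluster of cubes joining opposite faces.\<close>

definition grid_index :: "nat \<Rightarrow> ('n::finite \<Rightarrow> nat) set" where
  "grid_index k = {i. \<forall>s. 1 \<le> i s \<and> i s \<le> k}"

definition grid_adjacent :: "('n::finite \<Rightarrow> nat) \<Rightarrow> ('n \<Rightarrow> nat) \<Rightarrow> bool" where
  "grid_adjacent i j \<longleftrightarrow> (\<forall>s. i s \<le> j s + 1 \<and> j s \<le> i s + 1)"

lemma grid_cubes_eq_image: "grid_cubes k = grid_cube k ` grid_index k"
  unfolding grid_cubes_def grid_index_def ..

lemma finite_grid_index: "finite (grid_index k :: ('n::finite \<Rightarrow> nat) set)"
proof (rule finite_subset)
  show "grid_index k \<subseteq> PiE (UNIV :: 'n set) (\<lambda>_. {..k})"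
    by (auto simp: grid_index_def PiE_def extensional_def)
qed (rule finite_PiE, auto)

lemma grid_cube_eq_cbox:
  "grid_cube k i = cbox (\<chi> s. (real (i s) - 1) / real k) (\<chi> s. real (i s) / real k)"
  by (auto simp: grid_cube_def mem_box_cart)

lemma connected_grid_cube: "connected (grid_cube k i)"
  unfolding grid_cube_eq_cbox by (simp add: convex_connected)

lemma closed_grid_cube: "closed (grid_cube k i)"
  unfolding grid_cube_eq_cbox by (rule closed_cbox)

lemma grid_cube_Int_nonempty_iff:
  assumes "k \<ge> 1"
  shows "grid_cube k i \<inter> grid_cube k j \<noteq> {} \<longleftrightarrow> grid_adjacent i j"
proof
  assume "grid_cube k i \<inter> grid_cube k j \<noteq> {}"
  then obtain z where zi: "z \<in> grid_cube k i" and zj: "z \<in> grid_cube k j" by blast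
  show "grid_adjacent i j" unfolding grid_adjacent_def
  proof
    fix s
    have "(real (i s) - 1) / real k \<le> z $ s" "z $ s \<le> real (i s) / real k"
      "(real (j s) - 1) / real k \<le> z $ s" "z $ s \<le> real (j s) / real k"
      using zi zj unfolding grid_cube_def by auto
    then have "(real (i s) - 1) / real k \<le> real (j s) / real k"
      "(real (j s) - 1) / real k \<le> real (i s) / real k" by linarith+
    then show "i s \<le> j s + 1 \<and> j s \<le> i s + 1"
      using assms by (simp add: divide_le_cancel)
  qed
next
  assume adj: "grid_adjacent i j"
  let ?z = "\<chi> s. (max (real (i s)) (real (j s)) - 1) / real k"
  have "(real (i s) - 1) / real k \<le> ?z $ s \<and> ?z $ s \<le> real (i s) / real k \<and>
        (real (j s) - 1) / real k \<le> ?z $ s \<and> ?z $ s \<le> real (j s) / real k" for s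
  proof -
    have "real (i s) \<le> real (j s) + 1" "real (j s) \<le> real (i s) + 1"
      using adj unfolding grid_adjacent_def by (metis of_nat_1 of_nat_add of_nat_le_iff)+
    then show ?thesis using assms by (auto intro!: divide_right_mono simp: max_def)
  qed
  then have "?z \<in> grid_cube k i \<and> ?z \<in> grid_cube k j" unfolding grid_cube_def by simp
  then show "grid_cube k i \<inter> grid_cube k j \<noteq> {}" by blast
qed

lemma grid_cube_nonempty: "k \<ge> 1 \<Longrightarrow> grid_cube k i \<noteq> {}"
  using grid_cube_Int_nonempty_iff[of k i i] by (simp add: grid_adjacent_def)

lemma inj_grid_cube:
  assumes "k \<ge> 1"
  shows "inj (grid_cube k :: ('n::finite \<Rightarrow> nat) \<Rightarrow> _)"
proof
  fix i j :: "'n \<Rightarrow> nat"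
  assume eq: "grid_cube k i = grid_cube k j"
  show "i = j"
  proof
    fix s
    have "(\<chi> s. real (i s) / real k) \<in> grid_cube k i" "(\<chi> s. real (j s) / real k) \<in> grid_cube k j"
      using assms unfolding grid_cube_def by (auto intro!: divide_right_mono)
    then have "(\<chi> s. real (i s) / real k) \<in> grid_cube k j" "(\<chi> s. real (j s) / real k) \<in> grid_cube k i"
      using eq by auto
    then have "real (i s) / real k \<le> real (j s) / real k" "real (j s) / real k \<le> real (i s) / real k"
      unfolding grid_cube_def by auto
    then show "i s = j s" using assms by (simp add: divide_le_cancel)
  qed
qed

lemma grid_cube_meets_face_0_iff:
  assumes "k \<ge> 1" "i \<in> grid_index k"
  shows "(\<exists>z\<in>grid_cube k i. z $ s = 0) \<longleftrightarrow> i s = 1"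
proof
  assume "\<exists>z\<in>grid_cube k i. z $ s = 0"
  then obtain z where z: "z \<in> grid_cube k i" "z $ s = 0" by blast
  then have "(real (i s) - 1) / real k \<le> z $ s" unfolding grid_cube_def by blast
  then have "(real (i s) - 1) / real k \<le> 0" using z(2) by simp
  then show "i s = 1" using assms unfolding grid_index_def
    by (simp add: divide_le_0_iff) (metis le_antisym)
next
  assume "i s = 1"
  then show "\<exists>z\<in>grid_cube k i. z $ s = 0"
    using assms by (intro bexI[of _ "\<chi> t. (real (i t) - 1) / real k"])
      (auto simp: grid_cube_def intro!: divide_right_mono)
qed

lemma grid_cube_meets_face_1_iff:
  assumes "k \<ge> 1" "i \<in> grid_index k"
  shows "(\<exists>z\<in>grid_cube k i. z $ s = 1) \<longleftrightarrow> i s = k"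
proof
  assume "\<exists>z\<in>grid_cube k i. z $ s = 1"
  then obtain z where z: "z \<in> grid_cube k i" "z $ s = 1" by blast
  then have "z $ s \<le> real (i s) / real k" unfolding grid_cube_def by blast
  then have "1 \<le> real (i s) / real k" using z(2) by simp
  then show "i s = k" using assms unfolding grid_index_def by (simp add: le_divide_eq le_antisym)
next
  assume "i s = k"
  then show "\<exists>z\<in>grid_cube k i. z $ s = 1"
    using assms by (intro bexI[of _ "\<chi> t. real (i t) / real k"])
      (auto simp: grid_cube_def intro!: divide_right_mono)
qed

lemma admissible_map_0_adjacent:
  assumes "admissible_map k 0 F" "k \<ge> 1" "i \<in> grid_index k" "j \<in> grid_index k" "grid_adjacent i j"
  shows "linf_dist (F (grid_cube k i)) (F (grid_cube k j)) \<le> 1"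
proof -
  have "grid_cube k i \<inter> grid_cube k j \<noteq> {}"
    using grid_cube_Int_nonempty_iff assms(2,5) by blast
  then have "aff_dim (grid_cube k i \<inter> grid_cube k j) \<ge> int 0"
    by (simp flip: not_less)
  then show ?thesis using assms(1,3,4) unfolding admissible_map_def grid_cubes_eq_image by simp
qed

lemma connected_Union_rtranclp:
  fixes A :: "'i \<Rightarrow> 'a::topological_space set"
  assumes conn: "\<And>i. connected (A i)" and meet: "\<And>i j. R i j \<Longrightarrow> A i \<inter> A j \<noteq> {}"
  shows "connected (\<Union>w\<in>{w. R\<^sup>*\<^sup>* u w}. A w)" (is "connected ?X")
proof (cases "A u = {}")
  case True
  have "w = u" if "R\<^sup>*\<^sup>* u w" for w
    using that by (rule converse_rtranclpE) (use True meet in blast)+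
  then have "(\<Union>w\<in>{w. R\<^sup>*\<^sup>* u w}. A w) = {}" using True by blast
  then show ?thesis by simp
next
  case False
  then obtain z where z: "z \<in> A u" by blast
  have "A w \<subseteq> connected_component_set ?X z" if "R\<^sup>*\<^sup>* u w" for w
    using that
  proof (induction rule: rtranclp_induct)
    case base
    show ?case by (rule connected_component_maximal) (use z conn in auto)
  next
    case (step y w)
    obtain q where q: "q \<in> A y" "q \<in> A w" using meet[OF step(2)] by blast
    have "A w \<subseteq> connected_component_set ?X q"
      by (rule connected_component_maximal) (use q conn step(1,2) in \<open>auto intro: rtranclp.rtrancl_into_rtrancl\<close>)
    also have "connected_component_set ?X q = connected_component_set ?X z"
      using step(3) q(1) by (intro connected_component_eq) auto
    finally show ?case .
  qed
  then have "?X = connected_component_set ?X z"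
    using connected_component_subset by blast
  then show ?thesis by (metis connected_connected_component)
qed

lemma connects_opposite_faces_grid_chain:
  assumes "k \<ge> 1" "u \<in> grid_index k" "v \<in> grid_index k" "u c = 1" "v c = k" "R\<^sup>*\<^sup>* u v"
    and "\<And>i j. R i j \<Longrightarrow> grid_adjacent i j"
  shows "connects_opposite_faces (\<Union>w\<in>{w. R\<^sup>*\<^sup>* u w}. grid_cube k w)"
proof -
  have "connected (\<Union>w\<in>{w. R\<^sup>*\<^sup>* u w}. grid_cube k w)"
    by (rule connected_Union_rtranclp[OF connected_grid_cube])
      (use assms(1,7) grid_cube_Int_nonempty_iff in blast)
  moreover obtain z0 where "z0 \<in> grid_cube k u" "z0 $ c = 0"
    using grid_cube_meets_face_0_iff[OF assms(1,2)] assms(4) by blast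
  moreover obtain z1 where "z1 \<in> grid_cube k v" "z1 $ c = 1"
    using grid_cube_meets_face_1_iff[OF assms(1,3)] assms(5) by blast
  ultimately show ?thesis
    unfolding connects_opposite_faces_def using assms(6) by blast
qed

lemma connected_Union_closed_chain:
  fixes \<A> :: "'a::topological_space set set"
  assumes "finite \<A>" and closed: "\<And>S. S \<in> \<A> \<Longrightarrow> closed S" and conn: "connected (\<Union>\<A>)"
    and "A \<in> \<A>" "B \<in> \<A>" "A \<noteq> {}" "B \<noteq> {}"
  shows "(\<lambda>S T. S \<in> \<A> \<and> T \<in> \<A> \<and> S \<inter> T \<noteq> {})\<^sup>*\<^sup>* A B" (is "?Q\<^sup>*\<^sup>* A B")
proof (rule ccontr)
  assume not_reached: "\<not> ?Q\<^sup>*\<^sup>* A B"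
  define \<R> where "\<R> = {T. ?Q\<^sup>*\<^sup>* A T}"
  have "\<R> \<subseteq> \<A>"
  proof
    fix T assume "T \<in> \<R>"
    then have "?Q\<^sup>*\<^sup>* A T" unfolding \<R>_def by simp
    then show "T \<in> \<A>" by (cases rule: rtranclp.cases) (use \<open>A \<in> \<A>\<close> in auto)
  qed
  have closed_parts: "closed (\<Union>\<R>)" "closed (\<Union>(\<A> - \<R>))"
    using \<open>\<R> \<subseteq> \<A>\<close> \<open>finite \<A>\<close> closed by (auto dest: finite_subset)
  have "\<Union>\<R> \<inter> \<Union>(\<A> - \<R>) = {}"
  proof (rule ccontr)
    assume "\<Union>\<R> \<inter> \<Union>(\<A> - \<R>) \<noteq> {}"
    then obtain S T where "S \<in> \<R>" "T \<in> \<A>" "T \<notin> \<R>" "S \<inter> T \<noteq> {}" by blast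
    then show False using \<open>\<R> \<subseteq> \<A>\<close> unfolding \<R>_def by (auto intro: rtranclp.rtrancl_into_rtrancl)
  qed
  then have "\<Union>\<R> \<inter> \<Union>(\<A> - \<R>) \<inter> \<Union>\<A> = {}" by blast
  from connected_closedD[OF conn this _ closed_parts]
  have split: "\<Union>\<R> \<inter> \<Union>\<A> = {} \<or> \<Union>(\<A> - \<R>) \<inter> \<Union>\<A> = {}" by blast
  have "A \<in> \<R>" "B \<notin> \<R>" using not_reached unfolding \<R>_def by simp_all
  then have "A \<subseteq> \<Union>\<R> \<inter> \<Union>\<A>" "B \<subseteq> \<Union>(\<A> - \<R>) \<inter> \<Union>\<A>"
    using \<open>A \<in> \<A>\<close> \<open>B \<in> \<A>\<close> by blast+
  with split show False using \<open>A \<noteq> {}\<close> \<open>B \<noteq> {}\<close> by blast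
qed

section \<open>The Hex theorem\<close>

lemma cbox_point_field_outward:
  fixes a b :: "real^'n::finite" and D :: "real^'n \<Rightarrow> real^'n"
  assumes "\<And>s. a $ s \<le> b $ s" and "continuous_on (cbox a b) D"
  obtains x where "x \<in> cbox a b"
    and "\<And>s. D x $ s > 0 \<Longrightarrow> x $ s = b $ s" and "\<And>s. D x $ s < 0 \<Longrightarrow> x $ s = a $ s"
proof -
  define f where "f x = (\<chi> s. max (a $ s) (min (b $ s) ((x + D x) $ s)))" for x
  have "continuous_on (cbox a b) f"
    unfolding f_def using assms(2) by (intro continuous_intros)
  moreover have "f \<in> cbox a b \<rightarrow> cbox a b"
    using assms(1) by (auto simp: f_def mem_box_cart)
  moreover have "a \<in> cbox a b"
    using assms(1) by (simp add: mem_box_cart)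
  ultimately obtain x where x: "x \<in> cbox a b" "f x = x"
    using brouwer[OF compact_cbox convex_box(1)] by (metis empty_iff)
  have fixed: "x $ s = max (a $ s) (min (b $ s) (x $ s + D x $ s))" for s
    using arg_cong[OF x(2), of "\<lambda>y. y $ s"] unfolding f_def by simp
  show ?thesis
  proof (rule that[OF x(1)])
    show "x $ s = b $ s" if "D x $ s > 0" for s
      using fixed[of s] that x(1) assms(1)[of s]
      by (auto simp: mem_box_cart max_def min_def split: if_splits)
    show "x $ s = a $ s" if "D x $ s < 0" for s
      using fixed[of s] that x(1) assms(1)[of s]
      by (auto simp: mem_box_cart max_def min_def split: if_splits)
  qed
qed

definition tent :: "('n::finite \<Rightarrow> nat) \<Rightarrow> real^'n \<Rightarrow> real" where
  "tent v x = (\<Prod>s\<in>UNIV. max 0 (1 - \<bar>x $ s - real (v s)\<bar>))"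

lemma continuous_on_tent: "continuous_on S (tent v)"
  unfolding tent_def by (intro continuous_intros)

lemma tent_nonneg: "tent v x \<ge> 0"
  unfolding tent_def by (intro prod_nonneg) auto

lemma tent_pos_iff: "tent v x > 0 \<longleftrightarrow> (\<forall>s. \<bar>x $ s - real (v s)\<bar> < 1)"
proof
  assume pos: "tent v x > 0"
  show "\<forall>s. \<bar>x $ s - real (v s)\<bar> < 1"
  proof (rule allI, rule ccontr)
    fix s assume "\<not> \<bar>x $ s - real (v s)\<bar> < 1"
    then have "max 0 (1 - \<bar>x $ s - real (v s)\<bar>) = 0" by simp
    then have "tent v x = 0" unfolding tent_def by (intro prod_zero) auto
    with pos show False by simp
  qed
next
  assume "\<forall>s. \<bar>x $ s - real (v s)\<bar> < 1"
  then show "tent v x > 0" unfolding tent_def by (intro prod_pos) auto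
qed

lemma grid_adjacent_if_tent_pos:
  assumes "tent v x > 0" "tent w x > 0"
  shows "grid_adjacent v w"
  unfolding grid_adjacent_def
proof
  fix s
  have "\<bar>x $ s - real (v s)\<bar> < 1" "\<bar>x $ s - real (w s)\<bar> < 1"
    using assms by (auto simp: tent_pos_iff)
  then show "v s \<le> w s + 1 \<and> w s \<le> v s + 1" by linarith
qed

lemma floor_in_grid_index:
  assumes "x \<in> cbox (\<chi> _. 1) (\<chi> _. real k)"
  shows "(\<lambda>s. nat \<lfloor>x $ s\<rfloor>) \<in> grid_index k" and "tent (\<lambda>s. nat \<lfloor>x $ s\<rfloor>) x > 0"
proof -
  have x: "1 \<le> x $ s" "x $ s \<le> real k" for s
    using assms by (auto simp: mem_box_cart)
  have "0 \<le> \<lfloor>x $ s\<rfloor>" for s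
    using x(1)[of s] by simp
  then have nat_floor: "real (nat \<lfloor>x $ s\<rfloor>) = of_int \<lfloor>x $ s\<rfloor>" for s
    by simp
  have "0 < nat \<lfloor>x $ s\<rfloor> \<and> nat \<lfloor>x $ s\<rfloor> \<le> k" for s
    using x[of s] by (simp add: floor_le_iff nat_le_iff)
  then show "(\<lambda>s. nat \<lfloor>x $ s\<rfloor>) \<in> grid_index k"
    unfolding grid_index_def by (simp add: Suc_le_eq)
  show "tent (\<lambda>s. nat \<lfloor>x $ s\<rfloor>) x > 0"
    unfolding tent_pos_iff
  proof
    fix s
    show "\<bar>x $ s - real (nat \<lfloor>x $ s\<rfloor>)\<bar> < 1"
      using of_int_floor_le[of "x $ s"] real_of_int_floor_add_one_gt[of "x $ s"]
        nat_floor[of s] by linarith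
  qed
qed

lemma tent_combination_component:
  fixes d :: "('n::finite \<Rightarrow> nat) \<Rightarrow> real^'n"
  assumes "v0 \<in> grid_index k" "tent v0 x > 0" "d v0 $ c = \<sigma>"
    and "\<And>v. v \<in> grid_index k \<Longrightarrow> tent v x > 0 \<Longrightarrow> d v $ c = \<sigma> \<or> d v $ c = 0"
  obtains T where "T > 0" "(\<Sum>v\<in>grid_index k. tent v x *\<^sub>R d v) $ c = \<sigma> * T"
proof
  let ?T = "\<Sum>v\<in>grid_index k. if d v $ c = \<sigma> then tent v x else 0"
  have "(\<Sum>v\<in>grid_index k. tent v x *\<^sub>R d v) $ c = (\<Sum>v\<in>grid_index k. tent v x * d v $ c)"
    by simp
  also have "\<dots> = (\<Sum>v\<in>grid_index k. \<sigma> * (if d v $ c = \<sigma> then tent v x else 0))"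
  proof (rule sum.cong[OF refl])
    fix v :: "'n \<Rightarrow> nat" assume "v \<in> grid_index k"
    then show "tent v x * d v $ c = \<sigma> * (if d v $ c = \<sigma> then tent v x else 0)"
      using assms(4)[of v] tent_nonneg[of v x] by (cases "tent v x > 0") auto
  qed
  also have "\<dots> = \<sigma> * ?T" by (simp add: sum_distrib_left)
  finally show "(\<Sum>v\<in>grid_index k. tent v x *\<^sub>R d v) $ c = \<sigma> * ?T" .
  have "tent v0 x \<le> ?T"
    using member_le_sum[OF assms(1), of "\<lambda>v. if d v $ c = \<sigma> then tent v x else 0"] assms(3)
    by (simp add: tent_nonneg finite_grid_index)
  then show "?T > 0" using assms(2) by linarith
qed

definition mono_adjacent ::
  "(('n::finite \<Rightarrow> nat) \<Rightarrow> 'n) \<Rightarrow> nat \<Rightarrow> 'n \<Rightarrow> ('n \<Rightarrow> nat) \<Rightarrow> ('n \<Rightarrow> nat) \<Rightarrow> bool" where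
  "mono_adjacent col k c u v \<longleftrightarrow>
     u \<in> grid_index k \<and> v \<in> grid_index k \<and> col u = c \<and> col v = c \<and> grid_adjacent u v"

theorem hex_theorem:
  fixes col :: "('n::finite \<Rightarrow> nat) \<Rightarrow> 'n"
  assumes "k \<ge> 1"
  obtains c u v where "u \<in> grid_index k" "col u = c" "u c = 1"
    and "(mono_adjacent col k c)\<^sup>*\<^sup>* u v" "v c = k"
proof (rule ccontr)
  assume no_crossing: "\<not> thesis"
  define reached where
    "reached c v \<longleftrightarrow> (\<exists>u \<in> grid_index k. col u = c \<and> u c = 1 \<and> (mono_adjacent col k c)\<^sup>*\<^sup>* u v)" for c v
  txt \<open>Each index v pushes along the axis of its colour: towards the upper face if v is reached
    from the lower face by a monochromatic chain, towards the lower face otherwise. The tents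
    interpolate these pushes to a continuous field on [1, k]^n. At a point where the field points
    outwards, the nearby indices of the relevant colour are all reached or all unreached, which
    contradicts the face the point lies on.\<close>
  define dir :: "('n \<Rightarrow> nat) \<Rightarrow> real^'n" where
    "dir v = (\<chi> s. if s = col v then if reached (col v) v then 1 else -1 else 0)" for v
  define D :: "real^'n \<Rightarrow> real^'n" where "D x = (\<Sum>v\<in>grid_index k. tent v x *\<^sub>R dir v)" for x
  have "continuous_on (cbox (\<chi> _. 1) (\<chi> _. real k)) D"
    unfolding D_def by (intro continuous_intros continuous_on_tent)
  then obtain x where x: "x \<in> cbox (\<chi> _. 1) (\<chi> _. real k)"
    and up: "\<And>s. D x $ s > 0 \<Longrightarrow> x $ s = real k"
    and down: "\<And>s. D x $ s < 0 \<Longrightarrow> x $ s = 1"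
    using cbox_point_field_outward[of "\<chi> _. 1" "\<chi> _. real k" D] assms by auto
  define v0 where "v0 = (\<lambda>s. nat \<lfloor>x $ s\<rfloor>)"
  define c where "c = col v0"
  have v0: "v0 \<in> grid_index k" "tent v0 x > 0"
    using floor_in_grid_index[OF x] unfolding v0_def by auto
  have reached_iff: "reached c v \<longleftrightarrow> reached c v0"
    if "v \<in> grid_index k" "col v = c" "tent v x > 0" for v
  proof -
    have "mono_adjacent col k c v0 v" "mono_adjacent col k c v v0"
      using that v0 grid_adjacent_if_tent_pos unfolding mono_adjacent_def c_def by blast+
    then show ?thesis unfolding reached_def by (blast intro: rtranclp.rtrancl_into_rtrancl)
  qed
  define \<sigma> :: real where "\<sigma> = (if reached c v0 then 1 else -1)"
  obtain T where "T > 0" and D_c: "D x $ c = \<sigma> * T"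
  proof (rule tent_combination_component[OF v0, of dir c \<sigma>])
    show "dir v0 $ c = \<sigma>" unfolding dir_def \<sigma>_def c_def by simp
    show "dir v $ c = \<sigma> \<or> dir v $ c = 0" if "v \<in> grid_index k" "tent v x > 0" for v
      using reached_iff[OF that(1) _ that(2)] unfolding dir_def \<sigma>_def by auto
  qed (simp add: D_def)
  show False
  proof (cases "reached c v0")
    case True
    then have "x $ c = real k" using up D_c \<open>T > 0\<close> unfolding \<sigma>_def by simp
    then have "v0 c = k" unfolding v0_def by simp
    then show False using True no_crossing that unfolding reached_def by blast
  next
    case False
    then have "x $ c = 1" using down D_c \<open>T > 0\<close> unfolding \<sigma>_def by simp
    then have "v0 c = 1" unfolding v0_def by simp
    then show False using False v0(1) unfolding reached_def c_def by blast
  qed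
qed

section \<open>The upper bound\<close>

text \<open>In column x the bricks are the vertical dominoes {(x, 2r - x mod 2), (x, 2r + 1 - x mod 2)},
  laid like a brick wall. Touching bricks have indices differing by 1 or 2, so colouring
  bricks by their index mod 3 separates them.\<close>

definition brick_row :: "int^2 \<Rightarrow> int" where
  "brick_row p = (p $ 2 + p $ 1 mod 2) div 2"

definition brick :: "int^2 \<Rightarrow> (int^2) set" where
  "brick p = {q. q $ 1 = p $ 1 \<and> brick_row q = brick_row p}"

definition brick_index :: "int^2 \<Rightarrow> int" where
  "brick_index p = brick_row p + p $ 1 mod 2"

definition brick_colour :: "int^2 \<Rightarrow> 3" where
  "brick_colour p = of_int (brick_index p)"

lemma of_int_eq_iff_mod_3: "(of_int a :: 3) = of_int b \<longleftrightarrow> a mod 3 = b mod 3"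
proof -
  have "Rep_bit1 (of_int z :: 3) = z mod 3" for z
    using bit1.Rep_Abs_mod[of z, where 'a=num1] by (simp add: bit1.of_int_eq)
  then show ?thesis by (metis bit1.Rep_inject_sym)
qed

lemma linf_dist_le_1_iff: "linf_dist p q \<le> 1 \<longleftrightarrow> (\<forall>j. \<bar>p $ j - q $ j\<bar> \<le> 1)"
  unfolding linf_dist_def by simp

lemma one_connected_if_close:
  assumes "\<And>p q. p \<in> P \<Longrightarrow> q \<in> P \<Longrightarrow> linf_dist p q \<le> 1"
  shows "one_connected P"
  unfolding one_connected_def
proof (intro ballI)
  fix p q assume "p \<in> P" "q \<in> P"
  then show "\<exists>xs. xs \<noteq> [] \<and> hd xs = p \<and> last xs = q \<and> set xs \<subseteq> P \<and>
      (\<forall>j. Suc j < length xs \<longrightarrow> linf_dist (xs ! j) (xs ! Suc j) \<le> 1)"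
    using assms by (intro exI[of _ "[p, q]"]) (auto simp: less_Suc_eq)
qed

lemma linf_dist_brick:
  assumes "q \<in> brick p" "q' \<in> brick p"
  shows "linf_dist q q' \<le> 1"
proof -
  have "q $ 1 = q' $ 1" "brick_row q = brick_row q'" using assms unfolding brick_def by auto
  then have "\<bar>q $ 2 - q' $ 2\<bar> \<le> 1" unfolding brick_row_def by presburger
  with \<open>q $ 1 = q' $ 1\<close> show ?thesis unfolding linf_dist_le_1_iff by (simp add: forall_2)
qed

lemma finite_brick: "finite (brick p)" and card_brick_le: "card (brick p) \<le> 2"
proof -
  define lo where "lo = 2 * brick_row p - p $ 1 mod 2"
  define pt :: "int \<Rightarrow> int^2" where "pt y = (\<chi> j. if j = 1 then p $ 1 else y)" for y
  have "brick p \<subseteq> pt ` {lo, lo + 1}"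
  proof
    fix q assume "q \<in> brick p"
    then have col: "q $ 1 = p $ 1" and "brick_row q = brick_row p" unfolding brick_def by auto
    then have "q $ 2 = lo \<or> q $ 2 = lo + 1" unfolding brick_row_def lo_def by presburger
    moreover from col have "q = pt (q $ 2)"
      unfolding pt_def by (simp add: vec_eq_iff forall_2)
    ultimately show "q \<in> pt ` {lo, lo + 1}" by auto
  qed
  moreover have "card (pt ` {lo, lo + 1}) \<le> 2"
    using card_image_le[of "{lo, lo + 1}" pt] by simp
  ultimately show "finite (brick p)" "card (brick p) \<le> 2"
    by (auto intro: finite_subset dest: card_mono[rotated])
qed

lemma brick_row_bounds: "2 * brick_row p \<le> p $ 2 + p $ 1 mod 2 \<and> p $ 2 + p $ 1 mod 2 \<le> 2 * brick_row p + 1"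
  unfolding brick_row_def by presburger

lemma brick_index_neighbour:
  assumes "linf_dist p q \<le> 1" "q \<notin> brick p"
  shows "1 \<le> \<bar>brick_index p - brick_index q\<bar> \<and> \<bar>brick_index p - brick_index q\<bar> \<le> 2"
proof -
  have close: "\<bar>p $ 1 - q $ 1\<bar> \<le> 1" "\<bar>p $ 2 - q $ 2\<bar> \<le> 1"
    using assms(1) unfolding linf_dist_le_1_iff by auto
  then have "q $ 1 = p $ 1 \<longleftrightarrow> q $ 1 mod 2 = p $ 1 mod 2" by presburger
  then have "q $ 1 mod 2 \<noteq> p $ 1 mod 2 \<or> brick_row q \<noteq> brick_row p"
    using assms(2) unfolding brick_def by auto
  moreover have "p $ 1 mod 2 = 0 \<or> p $ 1 mod 2 = 1" "q $ 1 mod 2 = 0 \<or> q $ 1 mod 2 = 1"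
    by presburger+
  ultimately show ?thesis
    using close(2) brick_row_bounds[of p] brick_row_bounds[of q] unfolding brick_index_def by arith
qed

lemma same_brick_if_close_same_colour:
  assumes "linf_dist p q \<le> 1" "brick_colour p = brick_colour q"
  shows "q \<in> brick p"
proof (rule ccontr)
  assume "q \<notin> brick p"
  then have "brick_index p mod 3 \<noteq> brick_index q mod 3"
    using brick_index_neighbour[OF assms(1)] by presburger
  then show False using assms(2) unfolding brick_colour_def of_int_eq_iff_mod_3 by simp
qed

lemma good_constant_two: "good_constant TYPE(3) TYPE(2) 0 2"
  unfolding good_constant_def
proof (intro allI impI)
  fix k :: nat and F :: "(real^3) set \<Rightarrow> int^2"
  assume k: "k \<ge> 1" and adm: "admissible_map k 0 F"
  define col where "col i = brick_colour (F (grid_cube k i))" for i :: "3 \<Rightarrow> nat"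
  obtain c u v where u: "u \<in> grid_index k" "col u = c" "u c = 1"
    and uv: "(mono_adjacent col k c)\<^sup>*\<^sup>* u v" and v: "v c = k"
    by (rule hex_theorem[OF k, of col])
  define \<Sigma> where "\<Sigma> = grid_cube k ` {w. (mono_adjacent col k c)\<^sup>*\<^sup>* u w}"
  have reach: "w \<in> grid_index k \<and> F (grid_cube k w) \<in> brick (F (grid_cube k u))"
    if "(mono_adjacent col k c)\<^sup>*\<^sup>* u w" for w
    using that
  proof (induction rule: rtranclp_induct)
    case base
    then show ?case using u(1) by (simp add: brick_def)
  next
    case (step y w)
    then have "linf_dist (F (grid_cube k y)) (F (grid_cube k w)) \<le> 1"
      using admissible_map_0_adjacent[OF adm k] unfolding mono_adjacent_def by blast
    moreover have "col y = col w" using step(2) unfolding mono_adjacent_def by simp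
    ultimately have "F (grid_cube k w) \<in> brick (F (grid_cube k y))"
      unfolding col_def by (rule same_brick_if_close_same_colour)
    with step show ?case by (auto simp: brick_def mono_adjacent_def)
  qed
  have "connects_opposite_faces (\<Union>\<Sigma>)"
    unfolding \<Sigma>_def using reach[OF uv] u(1,3) v uv
    by (intro connects_opposite_faces_grid_chain[OF k]) (auto simp: mono_adjacent_def)
  moreover have "\<Sigma> \<subseteq> {K \<in> grid_cubes k. F K \<in> brick (F (grid_cube k u))}"
    using reach unfolding \<Sigma>_def grid_cubes_eq_image by auto
  moreover have "one_connected (brick (F (grid_cube k u)))"
    using linf_dist_brick by (rule one_connected_if_close)
  ultimately show "\<exists>P \<Sigma>. one_connected P \<and> finite P \<and> real (card P) \<le> 2 \<and>
      \<Sigma> \<subseteq> {K \<in> grid_cubes k. F K \<in> P} \<and> connects_opposite_faces (\<Union>\<Sigma>)"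
    using finite_brick card_brick_le by (intro exI[of _ "brick (F (grid_cube k u))"] exI[of _ \<Sigma>]) simp
qed

section \<open>The lower bound\<close>

text \<open>A colouring of the 3 \<times> 3 \<times> 3 grid by four colours without a monochromatic cluster joining
  opposite faces; the second table numbers the monochromatic clusters and certifies this.\<close>

definition crossing_free_colour :: "nat \<Rightarrow> nat \<Rightarrow> nat \<Rightarrow> nat" where
  "crossing_free_colour a b c =
     [[[1,2,2],[0,2,2],[0,1,1]], [[3,3,1],[0,3,0],[0,1,0]], [[3,2,1],[3,3,0],[2,2,0]]]
       ! (a - 1) ! (b - 1) ! (c - 1)"

definition cluster_label :: "nat \<Rightarrow> nat \<Rightarrow> nat \<Rightarrow> nat" where
  "cluster_label a b c =
     [[[0,1,1],[2,1,1],[2,3,3]], [[4,4,5],[2,4,6],[2,3,6]], [[4,7,5],[4,4,6],[8,8,6]]]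
       ! (a - 1) ! (b - 1) ! (c - 1)"

abbreviation colour_at :: "(3 \<Rightarrow> nat) \<Rightarrow> nat" where
  "colour_at i \<equiv> crossing_free_colour (i 1) (i 2) (i 3)"

abbreviation label_at :: "(3 \<Rightarrow> nat) \<Rightarrow> nat" where
  "label_at i \<equiv> cluster_label (i 1) (i 2) (i 3)"

lemma grid_index_3_range: "i \<in> grid_index 3 \<Longrightarrow> i s \<in> {1, 2, 3}"
  unfolding grid_index_def by (auto simp: le_Suc_eq numeral_3_eq_3)

lemma crossing_free_colour_lt_4:
  assumes "i \<in> grid_index 3"
  shows "colour_at i < 4"
proof -
  have "\<forall>a\<in>{1,2,3}. \<forall>b\<in>{1,2,3}. \<forall>c\<in>{1,2,3::nat}. crossing_free_colour a b c < 4"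
    unfolding crossing_free_colour_def ball_simps by simp
  then show ?thesis using grid_index_3_range[OF assms] by blast
qed

lemma cluster_label_eq_if_adjacent:
  assumes "i \<in> grid_index 3" "j \<in> grid_index 3" "grid_adjacent i j" "colour_at i = colour_at j"
  shows "label_at i = label_at j"
proof -
  have check: "\<forall>a\<in>{1,2,3}. \<forall>b\<in>{1,2,3}. \<forall>c\<in>{1,2,3}. \<forall>a'\<in>{1,2,3}. \<forall>b'\<in>{1,2,3}. \<forall>c'\<in>{1,2,3::nat}.
      a \<le> a' + 1 \<and> a' \<le> a + 1 \<and> b \<le> b' + 1 \<and> b' \<le> b + 1 \<and> c \<le> c' + 1 \<and> c' \<le> c + 1 \<and>
      crossing_free_colour a b c = crossing_free_colour a' b' c' \<longrightarrow>
      cluster_label a b c = cluster_label a' b' c'"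
    unfolding crossing_free_colour_def cluster_label_def ball_simps by simp
  note range = grid_index_3_range[OF assms(1)] grid_index_3_range[OF assms(2)]
  show ?thesis
    using check[rule_format, of "i 1" "i 2" "i 3" "j 1" "j 2" "j 3",
        OF range(1) range(1) range(1) range(2) range(2) range(2)] assms(3,4)
    unfolding grid_adjacent_def by blast
qed

lemma cluster_label_ne_across:
  assumes "i \<in> grid_index 3" "j \<in> grid_index 3" "i s = 1" "j s = 3" "colour_at i = colour_at j"
  shows "label_at i \<noteq> label_at j"
proof -
  have check: "\<forall>a\<in>{1,2,3}. \<forall>b\<in>{1,2,3}. \<forall>c\<in>{1,2,3}. \<forall>a'\<in>{1,2,3}. \<forall>b'\<in>{1,2,3}. \<forall>c'\<in>{1,2,3::nat}.
      (a = 1 \<and> a' = 3 \<or> b = 1 \<and> b' = 3 \<or> c = 1 \<and> c' = 3) \<and>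
      crossing_free_colour a b c = crossing_free_colour a' b' c' \<longrightarrow>
      cluster_label a b c \<noteq> cluster_label a' b' c'"
    unfolding crossing_free_colour_def cluster_label_def ball_simps by simp
  note range = grid_index_3_range[OF assms(1)] grid_index_3_range[OF assms(2)]
  have "i 1 = 1 \<and> j 1 = 3 \<or> i 2 = 1 \<and> j 2 = 3 \<or> i 3 = 1 \<and> j 3 = 3"
    using assms(3,4) exhaust_3[of s] by auto
  then show ?thesis
    using check[rule_format, of "i 1" "i 2" "i 3" "j 1" "j 2" "j 3",
        OF range(1) range(1) range(1) range(2) range(2) range(2)] assms(5)
    by blast
qed

definition monochromatic :: "(real^3) set set \<Rightarrow> bool" where
  "monochromatic \<Sigma> \<longleftrightarrow> (\<forall>i\<in>grid_index 3. \<forall>j\<in>grid_index 3.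
     grid_cube 3 i \<in> \<Sigma> \<longrightarrow> grid_cube 3 j \<in> \<Sigma> \<longrightarrow> colour_at i = colour_at j)"

lemma cluster_label_constant_along_chain:
  assumes sub: "\<Sigma> \<subseteq> grid_cubes 3" and mono: "monochromatic \<Sigma>" and u: "u \<in> grid_index 3"
    and chain: "(\<lambda>S T. S \<in> \<Sigma> \<and> T \<in> \<Sigma> \<and> S \<inter> T \<noteq> {})\<^sup>*\<^sup>* (grid_cube 3 u) (grid_cube 3 v)"
  shows "label_at v = label_at u"
proof -
  have "\<exists>w\<in>grid_index 3. T = grid_cube 3 w \<and> label_at w = label_at u"
    if "(\<lambda>S T. S \<in> \<Sigma> \<and> T \<in> \<Sigma> \<and> S \<inter> T \<noteq> {})\<^sup>*\<^sup>* (grid_cube 3 u) T" for T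
    using that
  proof (induction rule: rtranclp_induct)
    case base
    then show ?case using u by blast
  next
    case (step S T)
    then obtain w where w: "w \<in> grid_index 3" "S = grid_cube 3 w" "label_at w = label_at u" by blast
    obtain w' where w': "w' \<in> grid_index 3" "T = grid_cube 3 w'"
      using step(2) sub unfolding grid_cubes_eq_image by blast
    have "grid_adjacent w w'" using step(2) w w' grid_cube_Int_nonempty_iff[of 3] by auto
    moreover have "colour_at w = colour_at w'" using mono step(2) w w' unfolding monochromatic_def by blast
    ultimately have "label_at w = label_at w'" using cluster_label_eq_if_adjacent w(1) w'(1) by blast
    then show ?case using w w' by auto
  qed
  from this[OF chain] obtain w where "grid_cube 3 v = grid_cube 3 w" "label_at w = label_at u"
    by blast
  moreover have "inj (grid_cube 3 :: (3 \<Rightarrow> nat) \<Rightarrow> _)" by (simp add: inj_grid_cube)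
  ultimately show ?thesis by (metis injD)
qed

lemma not_connects_opposite_faces_monochromatic:
  assumes sub: "\<Sigma> \<subseteq> grid_cubes 3" and mono: "monochromatic \<Sigma>"
  shows "\<not> connects_opposite_faces (\<Union>\<Sigma>)"
proof
  assume "connects_opposite_faces (\<Union>\<Sigma>)"
  then obtain s z0 z1 where conn: "connected (\<Union>\<Sigma>)"
    and z0: "z0 \<in> \<Union>\<Sigma>" "z0 $ s = 0" and z1: "z1 \<in> \<Union>\<Sigma>" "z1 $ s = 1"
    unfolding connects_opposite_faces_def by blast
  have cube: "\<exists>i\<in>grid_index 3. K = grid_cube 3 i" if "K \<in> \<Sigma>" for K
    using that sub unfolding grid_cubes_eq_image by blast
  obtain u where u: "u \<in> grid_index 3" "grid_cube 3 u \<in> \<Sigma>" "z0 \<in> grid_cube 3 u"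
    using z0(1) cube by blast
  obtain v where v: "v \<in> grid_index 3" "grid_cube 3 v \<in> \<Sigma>" "z1 \<in> grid_cube 3 v"
    using z1(1) cube by blast
  have "u s = 1" using grid_cube_meets_face_0_iff[of 3 u s] u z0(2) by auto
  have "v s = 3" using grid_cube_meets_face_1_iff[of 3 v s] v z1(2) by auto
  have "finite \<Sigma>"
    using finite_subset[OF sub] finite_grid_index unfolding grid_cubes_eq_image by blast
  moreover have "closed S" if "S \<in> \<Sigma>" for S
    using cube[OF that] closed_grid_cube by blast
  moreover have "grid_cube 3 u \<noteq> {}" "grid_cube 3 v \<noteq> {}" by (simp_all add: grid_cube_nonempty)
  ultimately have "(\<lambda>S T. S \<in> \<Sigma> \<and> T \<in> \<Sigma> \<and> S \<inter> T \<noteq> {})\<^sup>*\<^sup>* (grid_cube 3 u) (grid_cube 3 v)"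
    using connected_Union_closed_chain[OF _ _ conn u(2) v(2)] by blast
  then have "label_at v = label_at u"
    using cluster_label_constant_along_chain[OF sub mono u(1)] by blast
  moreover have "colour_at u = colour_at v" using mono u v unfolding monochromatic_def by blast
  ultimately show False
    using cluster_label_ne_across[OF u(1) v(1) \<open>u s = 1\<close> \<open>v s = 3\<close>] by simp
qed

definition corner :: "nat \<Rightarrow> int^2" where
  "corner n = (\<chi> j. if j = 1 then of_bool (odd (n div 2)) else of_bool (odd n))"

lemma linf_dist_corner: "linf_dist (corner n) (corner m) \<le> 1"
  unfolding linf_dist_le_1_iff corner_def by (simp add: forall_2)

lemma corner_eq_imp_eq:
  assumes "n < 4" "m < 4" "corner n = corner m"
  shows "n = m"
proof -
  have "odd (n div 2) = odd (m div 2)" "odd n = odd m"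
    using assms(3) unfolding corner_def vec_eq_iff forall_2 by (simp_all add: of_bool_eq_iff)
  with assms(1,2) show ?thesis by presburger
qed

lemma not_good_constant_lt_two:
  assumes "C < 2"
  shows "\<not> good_constant TYPE(3) TYPE(2) 0 C"
proof
  assume good: "good_constant TYPE(3) TYPE(2) 0 C"
  define F :: "(real^3) set \<Rightarrow> int^2" where
    "F K = corner (colour_at (inv_into (grid_index 3) (grid_cube 3) K))" for K
  have F: "F (grid_cube 3 i) = corner (colour_at i)" if "i \<in> grid_index 3" for i
    unfolding F_def using inv_into_f_f[OF inj_on_subset[OF inj_grid_cube subset_UNIV] that] by simp
  have "admissible_map 3 0 F"
    unfolding admissible_map_def F_def using linf_dist_corner by blast
  then obtain P \<Sigma> where P: "finite P" "real (card P) \<le> C"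
    and sub: "\<Sigma> \<subseteq> {K \<in> grid_cubes 3. F K \<in> P}" and co: "connects_opposite_faces (\<Union>\<Sigma>)"
    using good[unfolded good_constant_def, rule_format, of 3 F] by auto
  have "card P \<le> 1" using P(2) assms by linarith
  then have single: "p = q" if "p \<in> P" "q \<in> P" for p q
    using P(1) that by (simp add: card_le_Suc0_iff_eq)
  have "monochromatic \<Sigma>"
    unfolding monochromatic_def
  proof (intro ballI impI)
    fix i j assume ij: "i \<in> grid_index 3" "j \<in> grid_index 3" "grid_cube 3 i \<in> \<Sigma>" "grid_cube 3 j \<in> \<Sigma>"
    show "colour_at i = colour_at j"
    proof (rule corner_eq_imp_eq)
      show "colour_at i < 4" "colour_at j < 4" using ij crossing_free_colour_lt_4 by blast+
      have "F (grid_cube 3 i) \<in> P" "F (grid_cube 3 j) \<in> P" using sub ij(3,4) by auto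
      then show "corner (colour_at i) = corner (colour_at j)"
        using single F ij(1,2) by metis
    qed
  qed
  moreover have "\<Sigma> \<subseteq> grid_cubes 3" using sub by blast
  ultimately show False using co not_connects_opposite_faces_monochromatic by blast
qed

lemma good_constant_mono:
  "good_constant tn td m C \<Longrightarrow> C \<le> C' \<Longrightarrow> good_constant tn td m C'"
  unfolding good_constant_def by (meson order_trans)

theorem corollary5p4:
  shows "hatC TYPE(3) TYPE(2) 0 = 2"
proof -
  have "{C. C > 0 \<and> good_constant TYPE(3) TYPE(2) 0 C} = {2..}"
  proof (intro set_eqI iffI)
    fix C :: real
    assume "C \<in> {C. C > 0 \<and> good_constant TYPE(3) TYPE(2) 0 C}"
    then have "\<not> C < 2" using not_good_constant_lt_two by blast
    then show "C \<in> {2..}" by simp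
  next
    fix C :: real
    assume "C \<in> {2..}"
    then show "C \<in> {C. C > 0 \<and> good_constant TYPE(3) TYPE(2) 0 C}"
      using good_constant_mono[OF good_constant_two] by auto
  qed
  then show ?thesis unfolding hatC_def by simp
qed

end
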